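(* Let $\mathcal{V}$ be a finely representable action with associated complete interaction $(\mathcal{V},\mathcal{H})$, and let $a\in C_0$. For any presentation $$a=\sum_{x\in F}q_{-x}+a_0+\sum_{x\in F}q_x,$$ where $F$ is a finite subset of $\Gamma^+\setminus\{0\}$, $a_0\in\mathcal{A}$, and for each $x\in F$, $q_{-x}$ (resp. $q_x$) is a quasi-monomial of negative (resp. positive) type of degree $x$, we have $\|a_0\|\le\|a\|$. In particular $a_0$ is uniquely determined by $a$.
   Context: $\mathcal{A}$ is a unital C$^*$-algebra, $\Gamma$ a totally ordered abelian group with identity $0$, $\Gamma^+=\{x\in\Gamma:0\le x\}$. An action of $\Gamma^+$ on $\mathcal{A}$ is a map $x\mapsto\mathcal{V}_x$ into the bounded positive linear maps on $\mathcal{A}$ with $\mathcal{V}_0=\mathrm{Id}$, $\mathcal{V}_x\mathcal{V}_y=\mathcal{V}_{x+y}$. A covariant representation of $\mathcal{V}$ is a triple $(C,\sigma,U)$ with $C$ a unital C$^*$-algebra, $\sigma:\mathcal{A}\to C$ a unital injective $*$-homomorphism and $U:\Gamma^+\to C$ a semigroup homomorphism with each $U_x$ a partial isometry, such that $\sigma(\mathcal{V}_x(a))=U_x\sigma(a)U_x^*$ and $U_x^*\sigma(a)U_x\in\sigma(\mathcal{A})$; $\mathcal{V}$ is finely representable if such exists. For finely representable $\mathcal{V}$ there is a unique action $\mathcal{H}$ (with $\sigma(\mathcal{H}_x(a))=U_x^*\sigma(a)U_x$ for every covariant representation) such that $(\mathcal{V},\mathcal{H})$ is a complete interaction. The crossed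 product $\mathcal{A}\rtimes_{(\mathcal{V},\mathcal{H})}\Gamma$ is the universal unital C$^*$-algebra generated by a copy of $\mathcal{A}$ and partial isometries $\{\hat U_x\}_{x\in\Gamma^+}$ subject to $\mathcal{V}_x(a)=\hat U_xa\hat U_x^*$, $\mathcal{H}_x(a)=\hat U_x^*a\hat U_x$, $\hat U_x\hat U_y=\hat U_{x+y}$. $C_0$ is the $*$-subalgebra generated by $\mathcal{A}$ and the $\hat U_x$. A monomial of negative (resp. positive) type is $a_1\hat U_{x_1}^*\cdots a_n\hat U_{x_n}^*$ (resp. $a_1\hat U_{x_1}\cdots a_n\hat U_{x_n}$) with $a_i\in\mathcal{A}$, $x_i\in\Gamma^+$, of degree $x_1+\dots+x_n$; a quasi-monomial of degree $x$ is a finite sum of monomials of the same type, all of degree $x$. Every element of $C_0$ admits a presentation of the displayed form. *)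

theory Defs
  imports "HOL-Analysis.Analysis"
begin

text \<open>The whole type is the algebra.\<close>

class cstar = banach + real_normed_algebra_1 +
  fixes cscale :: "complex \<Rightarrow> 'a \<Rightarrow> 'a"
    and invol :: "'a \<Rightarrow> 'a"
  assumes cscale_add_left: "cscale (c + d) x = cscale c x + cscale d x"
    and cscale_add_right: "cscale c (x + y) = cscale c x + cscale c y"
    and cscale_mult: "cscale (c * d) x = cscale c (cscale d x)"
    and cscale_one: "cscale 1 x = x"
    and cscale_of_real: "cscale (complex_of_real r) x = scaleR r x"
    and norm_cscale: "norm (cscale c x) = cmod c * norm x"
    and cscale_mult_left: "cscale c (x * y) = cscale c x * y"
    and cscale_mult_right: "cscale c (x * y) = x * cscale c y"
    and invol_invol: "invol (invol x) = x"
    and invol_add: "invol (x + y) = invol x + invol y"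
    and invol_mult: "invol (x * y) = invol y * invol x"
    and invol_cscale: "invol (cscale c x) = cscale (cnj c) (invol x)"
    and cstar_identity: "norm (invol x * x) = (norm x)\<^sup>2"

definition cpositive :: "'a::cstar \<Rightarrow> bool" where
  "cpositive a \<longleftrightarrow> (\<exists>b. a = invol b * b)"

definition clinear :: "('a::cstar \<Rightarrow> 'b::cstar) \<Rightarrow> bool" where
  "clinear f \<longleftrightarrow> (\<forall>x y. f (x + y) = f x + f y) \<and> (\<forall>c x. f (cscale c x) = cscale c (f x))"

definition bounded_positive_map :: "('a::cstar \<Rightarrow> 'a) \<Rightarrow> bool" where
  "bounded_positive_map f \<longleftrightarrow> clinear f \<and> (\<exists>K. \<forall>x. norm (f x) \<le> K * norm x)
      \<and> (\<forall>x. cpositive x \<longrightarrow> cpositive (f x))"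

definition star_hom :: "('a::cstar \<Rightarrow> 'b::cstar) \<Rightarrow> bool" where
  "star_hom f \<longleftrightarrow> clinear f \<and> (\<forall>x y. f (x * y) = f x * f y) \<and> (\<forall>x. f (invol x) = invol (f x))"

definition unital_star_hom :: "('a::cstar \<Rightarrow> 'b::cstar) \<Rightarrow> bool" where
  "unital_star_hom f \<longleftrightarrow> star_hom f \<and> f 1 = 1"

definition partial_isometry :: "'a::cstar \<Rightarrow> bool" where
  "partial_isometry u \<longleftrightarrow> u * invol u * u = u"

text \<open>Gamma is a type of class linordered_ab_group_add; maps are only relevant on
Gamma+ = {x. 0 <= x}.\<close>

definition is_action :: "('g::linordered_ab_group_add \<Rightarrow> 'a::cstar \<Rightarrow> 'a) \<Rightarrow> bool" where
  "is_action V \<longleftrightarrow> (\<forall>x\<ge>0. bounded_positive_map (V x)) \<and> V 0 = id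
      \<and> (\<forall>x\<ge>0. \<forall>y\<ge>0. V x \<circ> V y = V (x + y))"

text \<open>Covariant representation (C, sigma, U) of V, with C the C*-algebra given by the type 'c.\<close>

definition covariant_rep ::
  "('g::linordered_ab_group_add \<Rightarrow> 'a::cstar \<Rightarrow> 'a) \<Rightarrow> ('a \<Rightarrow> 'c::cstar) \<Rightarrow> ('g \<Rightarrow> 'c) \<Rightarrow> bool" where
  "covariant_rep V \<sigma> U \<longleftrightarrow> unital_star_hom \<sigma> \<and> inj \<sigma>
      \<and> (\<forall>x\<ge>0. \<forall>y\<ge>0. U (x + y) = U x * U y)
      \<and> (\<forall>x\<ge>0. partial_isometry (U x))
      \<and> (\<forall>x\<ge>0. \<forall>a. \<sigma> (V x a) = U x * \<sigma> a * invol (U x))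
      \<and> (\<forall>x\<ge>0. \<forall>a. \<exists>b. invol (U x) * \<sigma> a * U x = \<sigma> b)"

text \<open>Representation of the defining relations of the crossed product
A \<rtimes>_(V,H) Gamma in the C*-algebra 'c.  The universal norm of an element of C_0 is
the supremum of its norms under all such representations.\<close>

definition cp_rep ::
  "('g::linordered_ab_group_add \<Rightarrow> 'a::cstar \<Rightarrow> 'a) \<Rightarrow> ('g \<Rightarrow> 'a \<Rightarrow> 'a) \<Rightarrow> ('a \<Rightarrow> 'c::cstar) \<Rightarrow> ('g \<Rightarrow> 'c) \<Rightarrow> bool" where
  "cp_rep V H \<rho> W \<longleftrightarrow> unital_star_hom \<rho>
      \<and> (\<forall>x\<ge>0. \<forall>y\<ge>0. W (x + y) = W x * W y)
      \<and> (\<forall>x\<ge>0. partial_isometry (W x))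
      \<and> (\<forall>x\<ge>0. \<forall>a. \<rho> (V x a) = W x * \<rho> a * invol (W x))
      \<and> (\<forall>x\<ge>0. \<forall>a. \<rho> (H x a) = invol (W x) * \<rho> a * W x)"

text \<open>A monomial is a list [(a1,x1),...,(an,xn)]; of negative type it denotes
a1 U*_{x1} ... an U*_{xn}, of positive type a1 U_{x1} ... an U_{xn}.\<close>

definition mono_neg :: "('a::cstar \<Rightarrow> 'c::cstar) \<Rightarrow> ('g \<Rightarrow> 'c) \<Rightarrow> ('a \<times> 'g) list \<Rightarrow> 'c" where
  "mono_neg \<rho> W m = foldr (\<lambda>(a, x) r. \<rho> a * invol (W x) * r) m 1"

definition mono_pos :: "('a::cstar \<Rightarrow> 'c::cstar) \<Rightarrow> ('g \<Rightarrow> 'c) \<Rightarrow> ('a \<times> 'g) list \<Rightarrow> 'c" where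
  "mono_pos \<rho> W m = foldr (\<lambda>(a, x) r. \<rho> a * W x * r) m 1"

definition mono_degree_ok :: "'g::linordered_ab_group_add \<Rightarrow> ('a \<times> 'g) list \<Rightarrow> bool" where
  "mono_degree_ok d m \<longleftrightarrow> (\<forall>p\<in>set m. 0 \<le> snd p) \<and> sum_list (map snd m) = d"

text \<open>A quasi-monomial of degree d: a finite sum (list) of monomials, all of degree d.\<close>

definition quasi_mono :: "'g::linordered_ab_group_add \<Rightarrow> ('a \<times> 'g) list list \<Rightarrow> bool" where
  "quasi_mono d q \<longleftrightarrow> (\<forall>m\<in>set q. mono_degree_ok d m)"

definition qm_neg :: "('a::cstar \<Rightarrow> 'c::cstar) \<Rightarrow> ('g \<Rightarrow> 'c) \<Rightarrow> ('a \<times> 'g) list list \<Rightarrow> 'c" where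
  "qm_neg \<rho> W q = sum_list (map (mono_neg \<rho> W) q)"

definition qm_pos :: "('a::cstar \<Rightarrow> 'c::cstar) \<Rightarrow> ('g \<Rightarrow> 'c) \<Rightarrow> ('a \<times> 'g) list list \<Rightarrow> 'c" where
  "qm_pos \<rho> W q = sum_list (map (mono_pos \<rho> W) q)"

definition presentation ::
  "'g::linordered_ab_group_add set \<Rightarrow> ('g \<Rightarrow> ('a \<times> 'g) list list) \<Rightarrow> ('g \<Rightarrow> ('a \<times> 'g) list list) \<Rightarrow> bool" where
  "presentation F qn qp \<longleftrightarrow> finite F \<and> (\<forall>x\<in>F. 0 < x)
      \<and> (\<forall>x\<in>F. quasi_mono x (qn x) \<and> quasi_mono x (qp x))"

definition pres_val ::
  "('a::cstar \<Rightarrow> 'c::cstar) \<Rightarrow> ('g \<Rightarrow> 'c) \<Rightarrow> 'g set \<Rightarrow> ('g \<Rightarrow> ('a \<times> 'g) list list) \<Rightarrow> 'a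
     \<Rightarrow> ('g \<Rightarrow> ('a \<times> 'g) list list) \<Rightarrow> 'c" where
  "pres_val \<rho> W F qn a0 qp = (\<Sum>x\<in>F. qm_neg \<rho> W (qn x)) + \<rho> a0 + (\<Sum>x\<in>F. qm_pos \<rho> W (qp x))"

end

theory Submission
  imports Defs "HOL-Computational_Algebra.Formal_Power_Series" "HOL-Algebra.Group"
begin

text \<open>Let (\<sigma>, U) be a covariant representation of V. It satisfies the relations of the
  crossed product, and so does (\<sigma>, \<kappa> U) for every character \<kappa> of \<Gamma>. Passing from U to
  \<kappa> U multiplies a quasi-monomial of positive type and degree x by \<kappa> x, one of negative
  type by its conjugate, and leaves \<sigma> a0 alone. Averaging the twisted presentations over the
  first n powers of a character that is nontrivial at x and letting n tend to infinity removes
  the terms of degree x; doing this for every x in F shows that every bound on the norm of the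
  presentation bounds norm (\<sigma> a0). Characters nontrivial at a given x > 0 exist because \<Gamma>
  is torsion free: Zorn's lemma gives an additive \<phi> from \<Gamma> to the reals with \<phi> x = 1, and
  exp (i pi \<phi>) is such a character. Finally norm a0 \<le> norm (\<sigma> a0) because \<sigma> is an
  injective *-homomorphism, which follows from a positive/negative part decomposition built from
  square roots given by the binomial series.\<close>

lemma invol_zero [simp]: "invol (0::'a::cstar) = 0"
  using invol_add[of "0::'a" 0] by simp

lemma invol_minus [simp]: "invol (- x) = - invol (x::'a::cstar)"
  using invol_add[of x "- x"] by (simp add: eq_neg_iff_add_eq_0 add.commute)

lemma invol_diff [simp]: "invol (x - y) = invol x - invol (y::'a::cstar)"
  using invol_add[of x "- y"] by simp

lemma invol_scaleR [simp]: "invol (r *\<^sub>R x) = r *\<^sub>R invol (x::'a::cstar)"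
  by (metis cscale_of_real invol_cscale complex_cnj_complex_of_real)

lemma invol_one [simp]: "invol (1::'a::cstar) = 1"
  by (metis invol_invol invol_mult mult_1_right)

declare invol_invol [simp] invol_add [simp] invol_mult [simp]

lemma invol_power: "invol (w ^ n) = invol (w::'a::cstar) ^ n"
  by (induction n) (auto simp: power_commutes)

lemma norm_invol [simp]: "norm (invol (x::'a::cstar)) = norm x"
proof -
  have le: "norm y \<le> norm (invol y)" for y :: 'a
  proof (cases "y = 0")
    case False
    have "norm y * norm y = norm (invol y * y)" by (simp add: cstar_identity power2_eq_square)
    also have "\<dots> \<le> norm (invol y) * norm y" by (rule norm_mult_ineq)
    finally show ?thesis using False by simp
  qed simp
  show ?thesis using le[of x] le[of "invol x"] by simp
qed

lemma bounded_linear_invol: "bounded_linear (invol :: 'a::cstar \<Rightarrow> 'a)"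
  by (rule bounded_linear_intro[where K = 1]) auto

lemma norm_selfadjoint_square: "invol s = s \<Longrightarrow> norm (s * s) = (norm (s::'a::cstar))\<^sup>2"
  using cstar_identity[of s] by simp

lemma cscale_zero_left [simp]: "cscale 0 (x::'a::cstar) = 0"
  using cscale_add_left[of 0 0 x] by simp

lemma cscale_minus_left: "cscale (- c) x = - cscale c (x::'a::cstar)"
  using cscale_add_left[of c "- c" x] by (simp add: eq_neg_iff_add_eq_0 add.commute)

lemma cscale_mult_cscale: "cscale c x * cscale d y = cscale (c * d) (x * (y::'a::cstar))"
  by (metis cscale_mult cscale_mult_left cscale_mult_right)

lemma cscale_zero_right [simp]: "cscale c (0::'a::cstar) = 0"
  using cscale_add_right[of c "0::'a" 0] by simp

lemma cscale_diff_right: "cscale c (x - y) = cscale c x - cscale c (y::'a::cstar)"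
  using cscale_add_right[of c "x - y" y] by (simp add: eq_diff_eq)

lemma cscale_sum_list: "cscale c (sum_list xs) = sum_list (map (cscale c) (xs::'a::cstar list))"
  by (induction xs) (auto simp: cscale_add_right)

lemma cscale_sum_left: "cscale (\<Sum>j\<in>J. c j) (v::'a::cstar) = (\<Sum>j\<in>J. cscale (c j) v)"
  by (induction J rule: infinite_finite_induct) (auto simp: cscale_add_left)

lemma scaleR_cscale: "r *\<^sub>R cscale c (v::'a::cstar) = cscale (complex_of_real r * c) v"
  by (simp add: cscale_of_real[symmetric] cscale_mult)

lemma cscale_mult_mult_cscale: "cscale c x * y * cscale d z = cscale (c * d) (x * y * (z::'a::cstar))"
  by (metis cscale_mult_cscale cscale_mult_left)

section \<open>The binomial series of (1 - w) powr a\<close>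

definition binom_coeff :: "real \<Rightarrow> nat \<Rightarrow> real" where
  "binom_coeff a n = (- 1) ^ n * (a gchoose n)"

definition one_minus_powr :: "real \<Rightarrow> 'a::{banach,real_normed_algebra_1} \<Rightarrow> 'a" where
  "one_minus_powr a w = (\<Sum>n. binom_coeff a n *\<^sub>R w ^ n)"

lemma binom_coeff_0 [simp]: "binom_coeff a 0 = 1"
  by (simp add: binom_coeff_def)

lemma binom_coeff_Suc: "binom_coeff a (Suc k) = binom_coeff a k * ((of_nat k - a) / of_nat (Suc k))"
proof -
  have "of_nat (Suc k) * (a gchoose Suc k) = (a - of_nat k) * (a gchoose k)"
    using gbinomial_absorption[of k a] gbinomial_absorb_comp[of a k] by simp
  then have rec: "a gchoose Suc k = (a gchoose k) * (a - of_nat k) / of_nat (Suc k)"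
    by (simp add: field_simps del: of_nat_Suc)
  show ?thesis unfolding binom_coeff_def rec by (simp add: field_simps del: of_nat_Suc)
qed

lemma binom_coeff_nonpos:
  assumes "0 < a" "a < 1" "1 \<le> n"
  shows "binom_coeff a n \<le> 0"
  using assms(3)
proof (induction n rule: dec_induct)
  case (step n)
  have "0 \<le> (of_nat n - a) / of_nat (Suc n)" using step.hyps assms by simp
  then show ?case unfolding binom_coeff_Suc by (rule mult_nonpos_nonneg[OF step.IH])
qed (use assms in \<open>simp add: binom_coeff_def\<close>)

lemma binom_coeff_nonneg: "a \<le> 0 \<Longrightarrow> 0 \<le> binom_coeff a n"
proof (induction n)
  case (Suc n)
  then have "0 \<le> (of_nat n - a) / of_nat (Suc n)" by simp
  then show ?case unfolding binom_coeff_Suc using Suc by simp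
qed simp

lemma sum_binom_coeff: "(\<Sum>k\<le>n. binom_coeff a k) = binom_coeff (a - 1) n"
  unfolding binom_coeff_def using gbinomial_sum_lower_neg[of a n] by (simp add: mult.commute)

text \<open>For 0 < a < 1 all coefficients but the first are nonpositive and their partial sums
  stay above -1, which gives absolute convergence on the closed unit ball.\<close>

lemma summable_abs_binom_coeff:
  assumes "0 < a" "a < 1"
  shows "summable (\<lambda>n. \<bar>binom_coeff a n\<bar>)"
proof (rule bounded_imp_summable[where B = 2])
  fix n
  have "(\<Sum>k\<le>n. \<bar>binom_coeff a k\<bar>) = (\<Sum>k\<le>n. (if k = 0 then 2 else 0) - binom_coeff a k)"
    using binom_coeff_nonpos[OF assms] by (intro sum.cong) auto
  also have "\<dots> = 2 - binom_coeff (a - 1) n"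
    by (simp add: sum_subtractf sum_binom_coeff)
  also have "\<dots> \<le> 2" using binom_coeff_nonneg[of "a - 1" n] assms by simp
  finally show "(\<Sum>k\<le>n. \<bar>binom_coeff a k\<bar>) \<le> 2" .
qed simp

lemma binom_coeff_convolution: "(\<Sum>i\<le>k. binom_coeff a i * binom_coeff b (k - i)) = binom_coeff (a + b) k"
proof -
  have "binom_coeff a i * binom_coeff b (k - i) = (- 1) ^ k * ((a gchoose i) * (b gchoose (k - i)))"
    if "i \<le> k" for i
  proof -
    have "(- 1 :: real) ^ i * (- 1) ^ (k - i) = (- 1) ^ k"
      using that by (simp add: power_add[symmetric])
    then show ?thesis unfolding binom_coeff_def by (metis mult.assoc mult.left_commute)
  qed
  then have "(\<Sum>i\<le>k. binom_coeff a i * binom_coeff b (k - i))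
      = (- 1) ^ k * (\<Sum>i=0..k. (a gchoose i) * (b gchoose (k - i)))"
    by (simp add: sum_distrib_left atMost_atLeast0)
  also have "\<dots> = binom_coeff (a + b) k" by (simp add: gbinomial_Vandermonde binom_coeff_def)
  finally show ?thesis .
qed

lemma summable_norm_binom_series:
  fixes w :: "'a::{banach,real_normed_algebra_1}"
  assumes "0 < a" "a < 1" "norm w \<le> 1"
  shows "summable (\<lambda>n. norm (binom_coeff a n *\<^sub>R w ^ n))"
proof (rule summable_comparison_test[OF _ summable_abs_binom_coeff[OF assms(1,2)]])
  have "norm (w ^ n) \<le> 1" for n
    using norm_power_ineq[of w n] power_le_one[OF norm_ge_zero assms(3), of n] by linarith
  then show "\<exists>N. \<forall>n\<ge>N. norm (norm (binom_coeff a n *\<^sub>R w ^ n)) \<le> \<bar>binom_coeff a n\<bar>"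
    by (simp add: mult_left_le)
qed

lemma summable_binom_series:
  fixes w :: "'a::{banach,real_normed_algebra_1}"
  assumes "0 < a" "a < 1" "norm w \<le> 1"
  shows "summable (\<lambda>n. binom_coeff a n *\<^sub>R w ^ n)"
  using summable_norm_binom_series[OF assms] by (rule summable_norm_cancel)

lemma one_minus_powr_add:
  fixes w :: "'a::{banach,real_normed_algebra_1}"
  assumes "0 < a" "a < 1" "0 < b" "b < 1" "norm w \<le> 1"
  shows "one_minus_powr a w * one_minus_powr b w = one_minus_powr (a + b) w"
proof -
  have "one_minus_powr a w * one_minus_powr b w
      = (\<Sum>k. \<Sum>i\<le>k. (binom_coeff a i *\<^sub>R w ^ i) * (binom_coeff b (k - i) *\<^sub>R w ^ (k - i)))"
    unfolding one_minus_powr_def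
    by (rule Cauchy_product[OF summable_norm_binom_series[OF assms(1,2,5)]
          summable_norm_binom_series[OF assms(3,4,5)]])
  also have "\<dots> = (\<Sum>k. binom_coeff (a + b) k *\<^sub>R w ^ k)"
  proof (rule suminf_cong)
    fix k
    have "(binom_coeff a i *\<^sub>R w ^ i) * (binom_coeff b (k - i) *\<^sub>R w ^ (k - i))
        = (binom_coeff a i * binom_coeff b (k - i)) *\<^sub>R w ^ k" if "i \<le> k" for i
      using that by (simp add: power_add[symmetric])
    then show "(\<Sum>i\<le>k. (binom_coeff a i *\<^sub>R w ^ i) * (binom_coeff b (k - i) *\<^sub>R w ^ (k - i)))
        = binom_coeff (a + b) k *\<^sub>R w ^ k"
      by (simp add: scaleR_sum_left[symmetric] binom_coeff_convolution)
  qed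
  finally show ?thesis unfolding one_minus_powr_def .
qed

lemma one_minus_powr_1: "one_minus_powr 1 (w::'a::{banach,real_normed_algebra_1}) = 1 - w"
proof -
  have "binom_coeff 1 n = 0" if "n \<notin> {0, 1}" for n
  proof -
    have "(1::real) gchoose n = of_nat (1 choose n)" by (metis binomial_gbinomial of_nat_1)
    then show ?thesis using that by (cases n) (auto simp: binom_coeff_def)
  qed
  then have "one_minus_powr 1 w = (\<Sum>n\<in>{0, 1}. binom_coeff 1 n *\<^sub>R w ^ n)"
    unfolding one_minus_powr_def by (intro suminf_finite) auto
  then show ?thesis by (simp add: binom_coeff_def)
qed

lemma one_minus_powr_commute:
  fixes w y :: "'a::{banach,real_normed_algebra_1}"
  assumes "0 < a" "a < 1" "norm w \<le> 1" "y * w = w * y"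
  shows "y * one_minus_powr a w = one_minus_powr a w * y"
proof -
  have "y * w ^ n = w ^ n * y" for n
    using power_commuting_commutes[OF assms(4)[symmetric]] by simp
  then show ?thesis
    unfolding one_minus_powr_def
    using suminf_mult[OF summable_binom_series[OF assms(1-3)], of y]
      suminf_mult2[OF summable_binom_series[OF assms(1-3)], of y]
    by simp
qed

lemma invol_one_minus_powr:
  fixes w :: "'a::cstar"
  assumes "0 < a" "a < 1" "norm w \<le> 1" "invol w = w"
  shows "invol (one_minus_powr a w) = one_minus_powr a w"
  unfolding one_minus_powr_def
  using bounded_linear.suminf[OF bounded_linear_invol summable_binom_series[OF assms(1-3)]]
  by (simp add: invol_power assms(4))

lemma one_minus_powr_half_square:
  "norm (w::'a::{banach,real_normed_algebra_1}) \<le> 1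
    \<Longrightarrow> one_minus_powr (1/2) w * one_minus_powr (1/2) w = 1 - w"
  using one_minus_powr_add[of "1/2" "1/2" w] one_minus_powr_1[of w] by simp

lemma one_minus_powr_quarter_square:
  "norm (w::'a::{banach,real_normed_algebra_1}) \<le> 1
    \<Longrightarrow> one_minus_powr (1/4) w * one_minus_powr (1/4) w = one_minus_powr (1/2) w"
  using one_minus_powr_add[of "1/4" "1/4" w] by simp

section \<open>Invertibility and square roots in C*-algebras\<close>

definition invertible_elem :: "'a::real_normed_algebra_1 \<Rightarrow> bool" where
  "invertible_elem x \<longleftrightarrow> (\<exists>v. x * v = 1 \<and> v * x = 1)"

lemma invertible_elem_mult:
  assumes "invertible_elem x" "invertible_elem y"
  shows "invertible_elem (x * y)"
proof -
  obtain u v where "x * u = 1" "u * x = 1" "y * v = 1" "v * y = 1"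
    using assms unfolding invertible_elem_def by blast
  then have "x * y * (v * u) = 1" "v * u * (x * y) = 1"
    by (metis mult.assoc mult_1_left)+
  then show ?thesis unfolding invertible_elem_def by blast
qed

lemma invertible_elem_scaleR:
  assumes "r \<noteq> 0" "invertible_elem x"
  shows "invertible_elem (r *\<^sub>R x)"
proof -
  obtain u where "x * u = 1" "u * x = 1" using assms(2) unfolding invertible_elem_def by blast
  then have "r *\<^sub>R x * (inverse r *\<^sub>R u) = 1" "inverse r *\<^sub>R u * (r *\<^sub>R x) = 1"
    using assms(1) by simp_all
  then show ?thesis unfolding invertible_elem_def by blast
qed

lemma invertible_elem_cancel: "x * y = 0 \<Longrightarrow> invertible_elem y \<Longrightarrow> x = 0"
  unfolding invertible_elem_def by (metis mult.assoc mult_1_right mult_zero_left)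

lemma invertible_elem_of_square:
  assumes "invertible_elem (e * e)"
  shows "invertible_elem e"
proof -
  obtain v where v: "e * e * v = 1" "v * (e * e) = 1"
    using assms unfolding invertible_elem_def by blast
  have "v * e = (v * e) * (e * (e * v))" using v(1) by (simp add: mult.assoc)
  also have "\<dots> = e * v" using v(2) by (metis mult.assoc mult_1_left)
  finally have "e * (v * e) = 1" using v(1) by (simp add: mult.assoc)
  moreover have "(v * e) * e = 1" using v(2) by (simp add: mult.assoc)
  ultimately show ?thesis unfolding invertible_elem_def by blast
qed

lemma invertible_one_minus:
  fixes g :: "'a::{banach,real_normed_algebra_1}"
  assumes "norm g < 1"
  shows "invertible_elem (1 - g)"
proof -
  have s: "summable (\<lambda>n. g ^ n)"
    using assms by (intro summable_comparison_test[OF _ summable_geometric[of "norm g"]])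
      (auto intro: norm_power_ineq)
  have "(\<lambda>n. g ^ n - g ^ Suc n) sums 1"
    using sums_minus[OF telescope_sums[OF LIMSEQ_power_zero[OF assms]]] by simp
  then have "(\<Sum>n. (1 - g) * g ^ n) = 1" "(\<Sum>n. g ^ n * (1 - g)) = 1"
    by (simp_all add: sums_iff algebra_simps power_commutes)
  then have "(1 - g) * (\<Sum>n. g ^ n) = 1" "(\<Sum>n. g ^ n) * (1 - g) = 1"
    by (simp_all add: suminf_mult[OF s] suminf_mult2[OF s])
  then show ?thesis unfolding invertible_elem_def by blast
qed

text \<open>u = c + i m satisfies invol u * u = s, so norm u = sqrt s, and c is the real part of u.\<close>

lemma norm_le_sqrt_if_sum_of_squares:
  fixes c m :: "'a::cstar"
  assumes sc: "invol c = c" and sm: "invol m = m" and cm: "c * m = m * c"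
    and sum: "c * c + m * m = s *\<^sub>R 1" and s0: "0 \<le> s"
  shows "norm c \<le> sqrt s"
proof -
  define u where "u = c + cscale \<i> m"
  have iu: "invol u = c - cscale \<i> m"
    unfolding u_def by (simp add: invol_cscale sc sm cscale_minus_left)
  have "c * cscale \<i> m = cscale \<i> m * c"
    by (metis cm cscale_mult_left cscale_mult_right)
  moreover have "cscale \<i> m * cscale \<i> m = - (m * m)"
    by (simp add: cscale_mult_cscale cscale_minus_left cscale_one)
  moreover have "invol u * u = (c - cscale \<i> m) * (c + cscale \<i> m)"
    using iu u_def by simp
  ultimately have "invol u * u = s *\<^sub>R 1"
    using sum by (simp add: algebra_simps)
  then have "norm u = sqrt s"
    using cstar_identity[of u] s0 by (metis norm_ge_zero norm_one norm_scaleR real_sqrt_unique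
        abs_of_nonneg mult.right_neutral)
  moreover have "c = (1/2) *\<^sub>R (u + invol u)"
    using iu u_def by (simp add: scaleR_2[symmetric])
  ultimately show ?thesis
    using norm_triangle_ineq[of u "invol u"] by simp
qed

lemma norm_one_minus_square_le:
  fixes c :: "'a::cstar"
  assumes sc: "invol c = c" and nc: "norm c \<le> 1"
  shows "norm (1 - c * c) \<le> 1"
proof -
  have nw: "norm (c * c) \<le> 1"
    using norm_mult_ineq[of c c] mult_le_one[OF nc norm_ge_zero nc] by linarith
  define m where "m = one_minus_powr (1/2) (c * c)"
  have sm: "invol m = m"
    unfolding m_def by (rule invol_one_minus_powr) (use nw sc in auto)
  have mm: "m * m = 1 - c * c"
    unfolding m_def by (rule one_minus_powr_half_square[OF nw])
  have cm: "m * c = c * m"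
    unfolding m_def by (rule one_minus_powr_commute[symmetric]) (use nw in \<open>auto simp: mult.assoc\<close>)
  have "norm m \<le> 1"
    using norm_le_sqrt_if_sum_of_squares[OF sm sc cm, of 1] mm by simp
  then show ?thesis
    using mm norm_selfadjoint_square[OF sm] by (simp add: power_le_one)
qed

lemma invertible_one_plus_square:
  fixes f :: "'a::cstar"
  assumes sf: "invol f = f"
  shows "invertible_elem (1 + f * f)"
proof -
  define l where "l = norm f + 1"
  have l0: "0 < l" unfolding l_def by (simp add: add_nonneg_pos)
  define q where "q = (1 / l) *\<^sub>R f"
  have "norm q \<le> 1" using l0 unfolding q_def l_def by (simp add: field_simps)
  then have nq: "norm (1 - q * q) \<le> 1"
    by (intro norm_one_minus_square_le) (simp_all add: q_def sf)
  have ff: "f * f = l\<^sup>2 *\<^sub>R (q * q)"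
    unfolding q_def using l0 by (simp add: power2_eq_square)
  have L: "0 < l\<^sup>2 + 1" by (simp add: add_nonneg_pos)
  define g where "g = (l\<^sup>2 / (l\<^sup>2 + 1)) *\<^sub>R (1 - q * q)"
  have "norm g \<le> l\<^sup>2 / (l\<^sup>2 + 1)"
    unfolding g_def using mult_left_le[OF nq, of "l\<^sup>2 / (l\<^sup>2 + 1)"] by simp
  also have "\<dots> < 1" using L by (simp add: divide_less_eq)
  finally have ng: "norm g < 1" .
  have "(l\<^sup>2 + 1) *\<^sub>R (1 - g) = (l\<^sup>2 + 1) *\<^sub>R 1 - l\<^sup>2 *\<^sub>R (1 - q * q)"
    unfolding g_def using L by (simp add: scaleR_diff_right)
  also have "\<dots> = 1 + f * f"
    unfolding ff by (simp add: algebra_simps)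
  finally show ?thesis
    using invertible_elem_scaleR[OF _ invertible_one_minus[OF ng], of "l\<^sup>2 + 1"] L by simp
qed

text \<open>With e = (1 - g) powr (1/2) and f = e\<inverse> \<beta> one has \<beta> * \<beta> + (1 - g) = e (1 + f * f) e.\<close>

lemma invertible_square_plus_one_minus:
  fixes \<beta> g :: "'a::cstar"
  assumes sb: "invol \<beta> = \<beta>" and sg: "invol g = g" and ng: "norm g < 1" and bg: "\<beta> * g = g * \<beta>"
  shows "invertible_elem (\<beta> * \<beta> + (1 - g))"
proof -
  have ng1: "norm g \<le> 1" using ng by simp
  define e where "e = one_minus_powr (1/2) g"
  have se: "invol e = e"
    unfolding e_def by (rule invol_one_minus_powr) (use ng1 sg in auto)
  have ee: "e * e = 1 - g"
    unfolding e_def by (rule one_minus_powr_half_square[OF ng1])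
  have be: "\<beta> * e = e * \<beta>"
    unfolding e_def by (rule one_minus_powr_commute) (use ng1 bg in auto)
  have inve: "invertible_elem e"
    by (rule invertible_elem_of_square) (simp add: ee invertible_one_minus[OF ng])
  then obtain v where ev: "e * v = 1" and ve: "v * e = 1"
    unfolding invertible_elem_def by blast
  have bv: "\<beta> * v = v * \<beta>"
    by (metis be ev ve mult.assoc mult_1_left mult_1_right)
  have sv: "invol v = v"
    by (metis ev se invol_mult invol_one mult.assoc mult_1_left mult_1_right)
  define f where "f = v * \<beta>"
  have sf: "invol f = f" unfolding f_def using sv sb bv by simp
  have "v * \<beta> * e = \<beta>" by (metis be ve mult.assoc mult_1_left)
  then have "e * (f * f) * e = \<beta> * \<beta>"
    unfolding f_def using ev by (metis mult.assoc mult_1_left)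
  then have "e * (1 + f * f) * e = \<beta> * \<beta> + (1 - g)"
    using ee by (simp add: algebra_simps)
  then show ?thesis
    using invertible_elem_mult[OF invertible_elem_mult[OF inve invertible_one_plus_square[OF sf]] inve]
    by simp
qed

lemma invertible_square_plus_scaled_one_minus:
  fixes \<beta> g :: "'a::cstar"
  assumes sb: "invol \<beta> = \<beta>" and sg: "invol g = g" and bg: "\<beta> * g = g * \<beta>" and ng: "norm g < s"
  shows "invertible_elem (\<beta> * \<beta> + (s *\<^sub>R 1 - g))"
proof -
  have s0: "0 < s" using ng norm_ge_zero[of g] by linarith
  define \<beta>' where "\<beta>' = (1 / sqrt s) *\<^sub>R \<beta>"
  have "\<beta> * \<beta> + (s *\<^sub>R 1 - g) = s *\<^sub>R (\<beta>' * \<beta>' + (1 - (1 / s) *\<^sub>R g))"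
    unfolding \<beta>'_def using s0 by (simp add: algebra_simps)
  moreover have "invertible_elem (\<beta>' * \<beta>' + (1 - (1 / s) *\<^sub>R g))"
    using s0 ng unfolding \<beta>'_def
    by (intro invertible_square_plus_one_minus) (simp_all add: sb sg bg divide_less_eq)
  ultimately show ?thesis using s0 by (simp add: invertible_elem_scaleR)
qed

text \<open>b is the square root of \<bar>k\<bar>: with M > norm k squared and q = k / sqrt M, it is
  M powr (1/4) times (1 - w) powr (1/4) for w = 1 - q * q, which has norm at most 1.\<close>

lemma exists_commuting_fourth_root_of_square:
  fixes k c :: "'a::cstar"
  assumes sk: "invol k = k" and ck: "c * k = k * c"
  shows "\<exists>b. invol b = b \<and> c * b = b * c \<and> (b * b) * (b * b) = k * k"
proof -
  define M where "M = (norm k)\<^sup>2 + 1"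
  have M0: "0 < M" unfolding M_def by (simp add: add_nonneg_pos)
  define q where "q = (1 / sqrt M) *\<^sub>R k"
  have sq: "invol q = q" unfolding q_def using sk by simp
  have "norm k < sqrt M" unfolding M_def by (simp add: real_less_rsqrt)
  then have "norm q \<le> 1" unfolding q_def using M0 by (simp add: field_simps)
  define w where "w = 1 - q * q"
  have nw: "norm w \<le> 1" unfolding w_def by (rule norm_one_minus_square_le[OF sq \<open>norm q \<le> 1\<close>])
  have sw: "invol w = w" unfolding w_def using sq by simp
  have cw: "c * w = w * c"
    unfolding w_def q_def by (simp add: algebra_simps) (metis ck mult.assoc)
  define t where "t = one_minus_powr (1/4) w"
  have st: "invol t = t" unfolding t_def by (rule invol_one_minus_powr) (use nw sw in auto)
  have ct: "c * t = t * c" unfolding t_def by (rule one_minus_powr_commute) (use nw cw in auto)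
  have tt: "(t * t) * (t * t) = q * q"
    unfolding t_def using one_minus_powr_quarter_square[OF nw] one_minus_powr_half_square[OF nw]
    by (simp add: w_def)
  define x where "x = sqrt (sqrt M)"
  define b where "b = x *\<^sub>R t"
  have "(b * b) * (b * b) = ((x * x) * (x * x)) *\<^sub>R ((t * t) * (t * t))"
    unfolding b_def by (simp only: mult_scaleR_left mult_scaleR_right scaleR_scaleR mult.assoc)
  also have "\<dots> = M *\<^sub>R (q * q)"
    unfolding tt x_def using M0 by simp
  also have "\<dots> = k * k"
    unfolding q_def using M0 by simp
  finally have "(b * b) * (b * b) = k * k" .
  moreover have "invol b = b" "c * b = b * c"
    unfolding b_def using st ct by simp_all
  ultimately show ?thesis by blast
qed

section \<open>Injective *-homomorphisms do not decrease norms\<close>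

lemma commute_mult_right:
  fixes x y z :: "'a::semigroup_mult"
  assumes "x * y = y * x" "x * z = z * x"
  shows "x * (y * z) = (y * z) * x"
proof -
  have "x * (y * z) = y * (x * z)" by (simp add: assms(1) mult.assoc[symmetric])
  also have "\<dots> = (y * z) * x" by (simp add: assms(2) mult.assoc)
  finally show ?thesis .
qed

lemma star_hom_add: "star_hom \<sigma> \<Longrightarrow> \<sigma> (x + y) = \<sigma> x + \<sigma> y"
  unfolding star_hom_def clinear_def by blast

lemma star_hom_cscale: "star_hom \<sigma> \<Longrightarrow> \<sigma> (cscale c x) = cscale c (\<sigma> x)"
  unfolding star_hom_def clinear_def by blast

lemma star_hom_mult: "star_hom \<sigma> \<Longrightarrow> \<sigma> (x * y) = \<sigma> x * \<sigma> y"
  unfolding star_hom_def by blast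

lemma star_hom_invol: "star_hom \<sigma> \<Longrightarrow> \<sigma> (invol x) = invol (\<sigma> x)"
  unfolding star_hom_def by blast

lemma star_hom_zero: "star_hom (\<sigma> :: 'a::cstar \<Rightarrow> 'c::cstar) \<Longrightarrow> \<sigma> 0 = 0"
  using star_hom_add[of \<sigma> 0 0] by simp

lemma star_hom_diff: "star_hom (\<sigma> :: 'a::cstar \<Rightarrow> 'c::cstar) \<Longrightarrow> \<sigma> (x - y) = \<sigma> x - \<sigma> y"
  using star_hom_add[of \<sigma> "x - y" y] by (simp add: eq_diff_eq)

lemma star_hom_scaleR: "star_hom (\<sigma> :: 'a::cstar \<Rightarrow> 'c::cstar) \<Longrightarrow> \<sigma> (r *\<^sub>R x) = r *\<^sub>R \<sigma> x"
  using star_hom_cscale[of \<sigma> "complex_of_real r" x] by (simp add: cscale_of_real)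

text \<open>Let h = c * c and k = h - s, and let r = \<bar>k\<bar>. Then (r + k) (r - k) = 0, while
  \<sigma> (r - k) = \<sigma> r + (s - \<sigma> h) is invertible because norm (\<sigma> h) < s. So \<sigma> (r + k) = 0,
  hence r + k = 0 by injectivity, i.e. c * c + r = s with r the square of a self-adjoint element.\<close>

lemma norm_le_sqrt_if_star_hom_norm_square_less:
  fixes \<sigma> :: "'a::cstar \<Rightarrow> 'c::cstar"
  assumes sh: "star_hom \<sigma>" and \<sigma>1: "\<sigma> 1 = 1" and inj: "inj \<sigma>"
    and sc: "invol c = c" and less: "norm (\<sigma> (c * c)) < s"
  shows "norm c \<le> sqrt s"
proof -
  define h where "h = c * c"
  define k where "k = h - s *\<^sub>R 1"
  have sk: "invol k = k" unfolding k_def h_def using sc by simp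
  have ck: "c * k = k * c" unfolding k_def h_def by (simp add: algebra_simps)
  obtain b where sb: "invol b = b" and cb: "c * b = b * c" and bk: "(b * b) * (b * b) = k * k"
    using exists_commuting_fourth_root_of_square[OF sk ck] by blast
  have bh: "b * h = h * b"
    unfolding h_def using commute_mult_right[OF cb[symmetric] cb[symmetric]] .
  have rk: "(b * b) * k = k * (b * b)"
    unfolding k_def using commute_mult_right[OF bh[symmetric] bh[symmetric]]
    by (simp add: algebra_simps)
  have "\<sigma> (b * b + k) * \<sigma> (b * b - k) = \<sigma> ((b * b + k) * (b * b - k))"
    by (rule star_hom_mult[OF sh, symmetric])
  also have "(b * b + k) * (b * b - k) = 0"
    using bk rk by (simp add: algebra_simps)
  finally have zero: "\<sigma> (b * b + k) * \<sigma> (b * b - k) = 0"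
    using star_hom_zero[OF sh] by simp
  have "\<sigma> (b * b - k) = \<sigma> b * \<sigma> b + (s *\<^sub>R 1 - \<sigma> h)"
    unfolding k_def
    by (simp add: star_hom_add[OF sh] star_hom_diff[OF sh] star_hom_mult[OF sh]
        star_hom_scaleR[OF sh] \<sigma>1 algebra_simps)
  moreover have "invertible_elem (\<sigma> b * \<sigma> b + (s *\<^sub>R 1 - \<sigma> h))"
  proof (rule invertible_square_plus_scaled_one_minus)
    show "invol (\<sigma> b) = \<sigma> b" "invol (\<sigma> h) = \<sigma> h"
      unfolding h_def using sb sc by (simp_all add: star_hom_invol[OF sh, symmetric])
    show "\<sigma> b * \<sigma> h = \<sigma> h * \<sigma> b"
      using bh by (simp add: star_hom_mult[OF sh, symmetric])
    show "norm (\<sigma> h) < s" unfolding h_def by (rule less)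
  qed
  ultimately have "\<sigma> (b * b + k) = \<sigma> 0"
    using invertible_elem_cancel[OF zero] star_hom_zero[OF sh] by simp
  then have "b * b + k = 0"
    by (rule injD[OF inj])
  then have "c * c + b * b = s *\<^sub>R 1"
    unfolding k_def h_def by (simp add: algebra_simps)
  then show ?thesis
    using norm_le_sqrt_if_sum_of_squares[OF sc sb cb] less norm_ge_zero[of "\<sigma> (c * c)"] by simp
qed

theorem norm_le_norm_injective_star_hom:
  fixes \<sigma> :: "'a::cstar \<Rightarrow> 'c::cstar"
  assumes "unital_star_hom \<sigma>" "inj \<sigma>"
  shows "norm a \<le> norm (\<sigma> a)"
proof -
  have sh: "star_hom \<sigma>" and \<sigma>1: "\<sigma> 1 = 1" using assms(1) unfolding unital_star_hom_def by auto
  have selfadjoint: "norm c \<le> norm (\<sigma> c)" if sc: "invol c = c" for c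
  proof -
    have "(norm c)\<^sup>2 \<le> s" if "(norm (\<sigma> c))\<^sup>2 < s" for s
    proof -
      have "norm (\<sigma> (c * c)) = (norm (\<sigma> c))\<^sup>2"
        using sc by (simp add: star_hom_mult[OF sh] star_hom_invol[OF sh, symmetric]
            norm_selfadjoint_square)
      then have "norm c \<le> sqrt s"
        using norm_le_sqrt_if_star_hom_norm_square_less[OF sh \<sigma>1 assms(2) sc] that by simp
      moreover have "0 \<le> s" using that zero_le_power2[of "norm (\<sigma> c)"] by linarith
      ultimately show ?thesis using power_mono[of "norm c" "sqrt s" 2] by simp
    qed
    then have "(norm c)\<^sup>2 \<le> (norm (\<sigma> c))\<^sup>2" by (rule dense_ge)
    then show ?thesis by (rule power2_le_imp_le) simp
  qed
  have "(norm a)\<^sup>2 = norm (invol a * a)" by (simp add: cstar_identity)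
  also have "\<dots> \<le> norm (\<sigma> (invol a * a))" by (rule selfadjoint) simp
  also have "\<dots> = (norm (\<sigma> a))\<^sup>2"
    by (simp add: star_hom_mult[OF sh] star_hom_invol[OF sh] cstar_identity)
  finally show ?thesis by (rule power2_le_imp_le) simp
qed

section \<open>Additive real functions on a totally ordered group\<close>

definition additive_group :: "'g::ab_group_add monoid" where
  "additive_group = \<lparr>carrier = UNIV, monoid.mult = (+), one = 0\<rparr>"

lemma comm_group_additive_group: "comm_group (additive_group :: 'g::ab_group_add monoid)"
proof (rule comm_groupI)
  fix x :: 'g
  show "\<exists>y\<in>carrier additive_group. y \<otimes>\<^bsub>additive_group\<^esub> x = \<one>\<^bsub>additive_group\<^esub>"
    by (rule bexI[of _ "- x"]) (simp_all add: additive_group_def)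
qed (simp_all add: additive_group_def add.assoc add.commute)

definition zmul :: "int \<Rightarrow> 'g::ab_group_add \<Rightarrow> 'g" where
  "zmul k y = y [^]\<^bsub>additive_group\<^esub> k"

lemma zmul_0 [simp]: "zmul 0 (y::'g::ab_group_add) = 0"
  by (simp add: zmul_def additive_group_def)

lemma zmul_1 [simp]: "zmul 1 (y::'g::ab_group_add) = y"
proof -
  interpret comm_group "additive_group :: 'g monoid" by (rule comm_group_additive_group)
  show ?thesis unfolding zmul_def by (rule int_pow_1) (simp add: additive_group_def)
qed

lemma zmul_add: "zmul (k + l) y = zmul k y + zmul l (y::'g::ab_group_add)"
proof -
  interpret comm_group "additive_group :: 'g monoid" by (rule comm_group_additive_group)
  show ?thesis unfolding zmul_def using int_pow_mult[of y k l] by (simp add: additive_group_def)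
qed

lemma zmul_minus: "zmul (- k) y = - zmul k (y::'g::ab_group_add)"
  using zmul_add[of k "- k" y] by (simp add: eq_neg_iff_add_eq_0 add.commute)

lemma zmul_diff: "zmul (k - l) y = zmul k y - zmul l (y::'g::ab_group_add)"
  using zmul_add[of k "- l" y] by (simp add: zmul_minus)

lemma zmul_zmul: "zmul k (zmul l y) = zmul (l * k) (y::'g::ab_group_add)"
proof -
  interpret comm_group "additive_group :: 'g monoid" by (rule comm_group_additive_group)
  show ?thesis unfolding zmul_def using int_pow_pow[of y l k] by (simp add: additive_group_def)
qed

lemma zmul_pos:
  fixes x :: "'g::linordered_ab_group_add"
  assumes "0 < x" "0 < k"
  shows "0 < zmul k x"
proof -
  have "1 \<le> k" using assms(2) by simp
  then show ?thesis
  proof (induction k rule: int_ge_induct)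
    case (step j)
    then show ?case using zmul_add[of j 1 x] assms(1) by (simp add: add_pos_pos)
  qed (use assms(1) in simp)
qed

lemma zmul_eq_0_iff:
  fixes x :: "'g::linordered_ab_group_add"
  assumes "0 < x"
  shows "zmul k x = 0 \<longleftrightarrow> k = 0"
proof
  assume "zmul k x = 0"
  moreover have "k < 0 \<Longrightarrow> zmul k x < 0"
    using zmul_pos[OF assms, of "- k"] by (simp add: zmul_minus)
  ultimately show "k = 0" using zmul_pos[OF assms, of k] by (metis less_irrefl not_less_iff_gr_or_eq)
qed simp

text \<open>Graphs of additive maps from subgroups of \<open>'g\<close> to the reals taking the value 1 at x.\<close>

definition partial_real_homs :: "'g::ab_group_add \<Rightarrow> ('g \<times> real) set set" where
  "partial_real_homs x = {R. (x, 1) \<in> R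
     \<and> (\<forall>a u b v. (a, u) \<in> R \<longrightarrow> (b, v) \<in> R \<longrightarrow> (a - b, u - v) \<in> R)
     \<and> (\<forall>a u v. (a, u) \<in> R \<longrightarrow> (a, v) \<in> R \<longrightarrow> u = v)}"

context
  fixes x :: "'g::ab_group_add" and R :: "('g \<times> real) set"
  assumes R: "R \<in> partial_real_homs x"
begin

lemma partial_real_homs_point: "(x, 1) \<in> R"
  using R unfolding partial_real_homs_def by blast

lemma partial_real_homs_diff: "(a, u) \<in> R \<Longrightarrow> (b, v) \<in> R \<Longrightarrow> (a - b, u - v) \<in> R"
  using R unfolding partial_real_homs_def by blast

lemma partial_real_homs_unique: "(a, u) \<in> R \<Longrightarrow> (a, v) \<in> R \<Longrightarrow> u = v"
  using R unfolding partial_real_homs_def by blast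

lemma partial_real_homs_zero: "(0, 0) \<in> R"
  using partial_real_homs_diff[OF partial_real_homs_point partial_real_homs_point] by simp

lemma partial_real_homs_add: "(a, u) \<in> R \<Longrightarrow> (b, v) \<in> R \<Longrightarrow> (a + b, u + v) \<in> R"
  using partial_real_homs_diff[OF _ partial_real_homs_diff[OF partial_real_homs_zero], of a u b v]
  by simp

lemma partial_real_homs_zmul: "(a, u) \<in> R \<Longrightarrow> (zmul k a, of_int k * u) \<in> R"
proof (induction k rule: int_induct[where k = 0])
  case (step1 i)
  then show ?case using partial_real_homs_add[OF step1(2) step1(3)]
    by (simp add: zmul_add algebra_simps)
next
  case (step2 i)
  then show ?case using partial_real_homs_diff[OF step2(2) step2(3)]
    by (simp add: zmul_diff algebra_simps)
qed (simp add: partial_real_homs_zero)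

text \<open>If (zmul k y, u) \<in> R with k \<noteq> 0, then t = u / k works, because (zmul m y, v) and
  (zmul k y, u) both determine the value at zmul (m * k) y.\<close>

lemma partial_real_homs_multiples:
  "\<exists>t. \<forall>m v. (zmul m y, v) \<in> R \<longrightarrow> v = of_int m * t"
proof (cases "\<exists>k u. k \<noteq> 0 \<and> (zmul k y, u) \<in> R")
  case True
  then obtain k u where k: "k \<noteq> 0" and ku: "(zmul k y, u) \<in> R" by blast
  have "v = of_int m * (u / of_int k)" if mv: "(zmul m y, v) \<in> R" for m v
  proof -
    have "(zmul (m * k) y, of_int k * v) \<in> R"
      using partial_real_homs_zmul[OF mv, of k] by (simp add: zmul_zmul)
    moreover have "(zmul (m * k) y, of_int m * u) \<in> R"
      using partial_real_homs_zmul[OF ku, of m] by (simp add: zmul_zmul mult.commute)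
    ultimately have "of_int k * v = of_int m * u" by (rule partial_real_homs_unique)
    then show ?thesis using k by (simp add: field_simps)
  qed
  then show ?thesis by blast
next
  case False
  then have "v = 0" if "(zmul m y, v) \<in> R" for m v
    using that partial_real_homs_unique[OF _ partial_real_homs_zero] by (metis zmul_0)
  then show ?thesis by (intro exI[of _ 0]) simp
qed

lemma partial_real_homs_extend:
  assumes y: "y \<notin> Domain R"
  shows "\<exists>R' \<in> partial_real_homs x. R \<subset> R'"
proof -
  obtain t where t: "\<And>m v. (zmul m y, v) \<in> R \<Longrightarrow> v = of_int m * t"
    using partial_real_homs_multiples by blast
  define R' where "R' = {(a + zmul k y, u + of_int k * t) | a u k. (a, u) \<in> R}"
  have "R \<subseteq> R'" unfolding R'_def by force
  moreover have "(y, t) \<in> R'"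
    unfolding R'_def using partial_real_homs_zero by force
  moreover have "R' \<in> partial_real_homs x"
    unfolding partial_real_homs_def
  proof (intro CollectI conjI allI impI)
    show "(x, 1) \<in> R'" using \<open>R \<subseteq> R'\<close> partial_real_homs_point by blast
  next
    fix a u b v assume "(a, u) \<in> R'" "(b, v) \<in> R'"
    then obtain a1 u1 k b1 v1 l where "(a1, u1) \<in> R" "(b1, v1) \<in> R"
      and "a = a1 + zmul k y" "u = u1 + of_int k * t" "b = b1 + zmul l y" "v = v1 + of_int l * t"
      unfolding R'_def by blast
    then show "(a - b, u - v) \<in> R'"
      unfolding R'_def using partial_real_homs_diff
      by (intro CollectI exI[of _ "a1 - b1"] exI[of _ "u1 - v1"] exI[of _ "k - l"])
        (auto simp: zmul_diff algebra_simps)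
  next
    fix a u v assume "(a, u) \<in> R'" "(a, v) \<in> R'"
    then obtain a1 u1 k b1 v1 l where R1: "(a1, u1) \<in> R" "(b1, v1) \<in> R"
      and a: "a = a1 + zmul k y" "a = b1 + zmul l y"
      and uv: "u = u1 + of_int k * t" "v = v1 + of_int l * t"
      unfolding R'_def by blast
    from a have "zmul (k - l) y = b1 - a1"
      by (simp add: zmul_diff algebra_simps eq_diff_eq diff_eq_eq)
    then have "(zmul (k - l) y, v1 - u1) \<in> R"
      using partial_real_homs_diff[OF R1(2,1)] by simp
    then have "v1 - u1 = of_int (k - l) * t" by (rule t)
    then show "u = v" using uv by (simp add: algebra_simps)
  qed
  ultimately show ?thesis using y by blast
qed

end

lemma partial_real_homs_nonempty:
  fixes x :: "'g::linordered_ab_group_add"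
  assumes "0 < x"
  shows "range (\<lambda>k. (zmul k x, of_int k)) \<in> partial_real_homs x"
  unfolding partial_real_homs_def
proof (intro CollectI conjI allI impI)
  show "(x, 1) \<in> range (\<lambda>k. (zmul k x, of_int k))"
    by (rule image_eqI[of _ _ 1]) simp_all
next
  fix a b :: 'g and u v :: real
  assume "(a, u) \<in> range (\<lambda>k. (zmul k x, of_int k))" "(b, v) \<in> range (\<lambda>k. (zmul k x, of_int k))"
  then obtain k l where "a = zmul k x" "u = of_int k" "b = zmul l x" "v = of_int l" by auto
  then show "(a - b, u - v) \<in> range (\<lambda>k. (zmul k x, of_int k))"
    by (intro image_eqI[of _ _ "k - l"]) (simp_all add: zmul_diff)
next
  fix a :: 'g and u v :: real
  assume "(a, u) \<in> range (\<lambda>k. (zmul k x, of_int k))" "(a, v) \<in> range (\<lambda>k. (zmul k x, of_int k))"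
  then obtain k l where "(a, u) = (zmul k x, of_int k)" "(a, v) = (zmul l x, of_int l)" by blast
  then have "a = zmul k x" "u = of_int k" "a = zmul l x" "v = of_int l" by simp_all
  moreover from this have "zmul (k - l) x = 0" by (simp add: zmul_diff)
  ultimately show "u = v" using zmul_eq_0_iff[OF assms] by simp
qed

lemma partial_real_homs_Union_chain:
  assumes "C \<noteq> {}" and C: "subset.chain (partial_real_homs x) C"
  shows "\<Union>C \<in> partial_real_homs x"
proof -
  have CR: "C \<subseteq> partial_real_homs x" and cmp: "\<And>X Y. X \<in> C \<Longrightarrow> Y \<in> C \<Longrightarrow> X \<subseteq> Y \<or> Y \<subseteq> X"
    using C unfolding subset.chain_def by auto
  have common: "\<exists>X\<in>C. p \<in> X \<and> q \<in> X" if "p \<in> \<Union>C" "q \<in> \<Union>C" for p q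
    using that cmp by blast
  show ?thesis
    unfolding partial_real_homs_def
  proof (intro CollectI conjI allI impI)
    show "(x, 1) \<in> \<Union>C"
      using \<open>C \<noteq> {}\<close> CR partial_real_homs_point by blast
    show "(a - b, u - v) \<in> \<Union>C" if "(a, u) \<in> \<Union>C" "(b, v) \<in> \<Union>C" for a u b v
      using common[OF that] CR partial_real_homs_diff by blast
    show "u = v" if "(a, u) \<in> \<Union>C" "(a, v) \<in> \<Union>C" for a u v
      using common[OF that] CR partial_real_homs_unique by blast
  qed
qed

theorem exists_additive_real_hom:
  fixes x :: "'g::linordered_ab_group_add"
  assumes "0 < x"
  shows "\<exists>\<phi> :: 'g \<Rightarrow> real. (\<forall>a b. \<phi> (a + b) = \<phi> a + \<phi> b) \<and> \<phi> x = 1"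
proof -
  have "\<exists>M\<in>partial_real_homs x. \<forall>R\<in>partial_real_homs x. M \<subseteq> R \<longrightarrow> R = M"
    by (rule subset_Zorn_nonempty[OF _ partial_real_homs_Union_chain])
      (use partial_real_homs_nonempty[OF assms] in blast)
  then obtain M where M: "M \<in> partial_real_homs x"
    and max: "\<And>R. R \<in> partial_real_homs x \<Longrightarrow> M \<subseteq> R \<Longrightarrow> R = M"
    by blast
  have "\<forall>a. \<exists>u. (a, u) \<in> M"
    using partial_real_homs_extend[OF M] max by blast
  then obtain \<phi> where \<phi>: "\<And>a. (a, \<phi> a) \<in> M" by metis
  have "\<phi> (a + b) = \<phi> a + \<phi> b" for a b
    using partial_real_homs_unique[OF M \<phi> partial_real_homs_add[OF M \<phi> \<phi>]] .
  moreover have "\<phi> x = 1"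
    using partial_real_homs_unique[OF M \<phi> partial_real_homs_point[OF M]] .
  ultimately show ?thesis by blast
qed

section \<open>Characters and twisted representations\<close>

definition characters :: "('g::ab_group_add \<Rightarrow> complex) set" where
  "characters = {\<kappa>. (\<forall>a b. \<kappa> (a + b) = \<kappa> a * \<kappa> b) \<and> (\<forall>a. cmod (\<kappa> a) = 1)}"

lemma character_add: "\<kappa> \<in> characters \<Longrightarrow> \<kappa> (a + b) = \<kappa> a * \<kappa> b"
  unfolding characters_def by blast

lemma norm_character: "\<kappa> \<in> characters \<Longrightarrow> cmod (\<kappa> a) = 1"
  unfolding characters_def by blast

lemma character_mult_cnj: "\<kappa> \<in> characters \<Longrightarrow> \<kappa> a * cnj (\<kappa> a) = 1"
  using complex_norm_square[of "\<kappa> a"] norm_character[of \<kappa> a] by simp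

lemma character_zero:
  assumes "\<kappa> \<in> characters"
  shows "\<kappa> 0 = 1"
proof -
  have "\<kappa> 0 * \<kappa> 0 = \<kappa> 0 * 1" using character_add[OF assms, of 0 0] by simp
  moreover have "\<kappa> 0 \<noteq> 0" using norm_character[OF assms, of 0] by auto
  ultimately show ?thesis by simp
qed

lemma characters_mult_power:
  "\<kappa> \<in> characters \<Longrightarrow> \<kappa>' \<in> characters \<Longrightarrow> (\<lambda>y. \<kappa> y * \<kappa>' y ^ j) \<in> characters"
  unfolding characters_def by (simp add: power_mult_distrib norm_mult norm_power)

lemma exists_character_ne_one:
  fixes x :: "'g::linordered_ab_group_add"
  assumes "0 < x"
  shows "\<exists>\<kappa>\<in>characters. \<kappa> x \<noteq> 1"
proof -
  obtain \<phi> :: "'g \<Rightarrow> real" where \<phi>: "\<And>a b. \<phi> (a + b) = \<phi> a + \<phi> b" and "\<phi> x = 1"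
    using exists_additive_real_hom[OF assms] by blast
  define \<kappa> where "\<kappa> y = exp (\<i> * of_real (pi * \<phi> y))" for y
  have "\<kappa> (a + b) = \<kappa> a * \<kappa> b" for a b
    unfolding \<kappa>_def \<phi> by (simp only: distrib_left of_real_add exp_add)
  moreover have "cmod (\<kappa> a) = 1" for a
    unfolding \<kappa>_def by (rule norm_exp_i_times)
  ultimately have "\<kappa> \<in> characters" unfolding characters_def by blast
  moreover have "\<kappa> x = - 1" using \<open>\<phi> x = 1\<close> by (simp add: \<kappa>_def)
  ultimately show ?thesis by (intro bexI[of _ \<kappa>]) simp_all
qed

definition twist :: "('g \<Rightarrow> complex) \<Rightarrow> ('g \<Rightarrow> 'c::cstar) \<Rightarrow> 'g \<Rightarrow> 'c" where
  "twist \<kappa> W x = cscale (\<kappa> x) (W x)"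

lemma invol_twist: "invol (twist \<kappa> W x) = cscale (cnj (\<kappa> x)) (invol (W x))"
  by (simp add: twist_def invol_cscale)

lemma cp_rep_twist:
  fixes V H :: "'g::linordered_ab_group_add \<Rightarrow> 'a::cstar \<Rightarrow> 'a" and \<rho> :: "'a \<Rightarrow> 'c::cstar"
  assumes cp: "cp_rep V H \<rho> W" and \<kappa>: "\<kappa> \<in> characters"
  shows "cp_rep V H \<rho> (twist \<kappa> W)"
proof -
  have unimodular: "\<kappa> x * cnj (\<kappa> x) = 1" "cnj (\<kappa> x) * \<kappa> x = 1" for x
    using character_mult_cnj[OF \<kappa>, of x] by (simp_all add: mult.commute)
  have sandwich: "cscale (\<kappa> x) (W x) * y * invol (cscale (\<kappa> x) (W x)) = W x * y * invol (W x)"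
    "invol (cscale (\<kappa> x) (W x)) * y * cscale (\<kappa> x) (W x) = invol (W x) * y * W x" for x y
    by (simp_all add: invol_cscale cscale_mult_mult_cscale unimodular cscale_one)
  have "cscale (\<kappa> x) (W x) * invol (cscale (\<kappa> x) (W x)) * cscale (\<kappa> x) (W x)
      = cscale (\<kappa> x) (W x * invol (W x) * W x)" for x
    using sandwich(1)[of x 1] by (simp add: cscale_mult_right)
  then show ?thesis
    using cp unfolding cp_rep_def partial_isometry_def twist_def
    by (simp add: sandwich character_add[OF \<kappa>] cscale_mult_cscale)
qed

lemma foldr_cscale_factors:
  fixes f :: "'a \<Rightarrow> 'c::cstar" and G :: "'g::monoid_add \<Rightarrow> 'c"
  assumes c_add: "\<And>x y. c (x + y) = c x * c y" and c_zero: "c 0 = 1"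
  shows "foldr (\<lambda>(a, x) r. f a * cscale (c x) (G x) * r) m 1
       = cscale (c (sum_list (map snd m))) (foldr (\<lambda>(a, x) r. f a * G x * r) m 1)"
proof (induction m)
  case Nil
  then show ?case by (simp add: c_zero cscale_one)
next
  case (Cons p m)
  obtain a x where p: "p = (a, x)" by (cases p)
  have "f a * cscale (c x) (G x) = cscale (c x) (f a * G x)" by (simp add: cscale_mult_right)
  then show ?case
    using Cons.IH by (simp add: p c_add cscale_mult_cscale)
qed

lemma mono_pos_twist:
  "\<kappa> \<in> characters \<Longrightarrow> mono_pos \<rho> (twist \<kappa> W) m = cscale (\<kappa> (sum_list (map snd m))) (mono_pos \<rho> W m)"
  unfolding mono_pos_def twist_def
  by (rule foldr_cscale_factors) (simp_all add: character_add character_zero)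

lemma mono_neg_twist:
  "\<kappa> \<in> characters \<Longrightarrow>
    mono_neg \<rho> (twist \<kappa> W) m = cscale (cnj (\<kappa> (sum_list (map snd m)))) (mono_neg \<rho> W m)"
  unfolding mono_neg_def invol_twist
  by (rule foldr_cscale_factors[where G = "\<lambda>x. invol (W x)" and c = "\<lambda>x. cnj (\<kappa> x)"])
    (simp_all add: character_add character_zero)

lemma qm_pos_twist:
  assumes "\<kappa> \<in> characters" "quasi_mono d q"
  shows "qm_pos \<rho> (twist \<kappa> W) q = cscale (\<kappa> d) (qm_pos \<rho> W q)"
  using assms unfolding qm_pos_def quasi_mono_def mono_degree_ok_def cscale_sum_list map_map
  by (intro arg_cong[where f = sum_list] map_cong) (simp_all add: mono_pos_twist)

lemma qm_neg_twist:
  assumes "\<kappa> \<in> characters" "quasi_mono d q"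
  shows "qm_neg \<rho> (twist \<kappa> W) q = cscale (cnj (\<kappa> d)) (qm_neg \<rho> W q)"
  using assms unfolding qm_neg_def quasi_mono_def mono_degree_ok_def cscale_sum_list map_map
  by (intro arg_cong[where f = sum_list] map_cong) (simp_all add: mono_neg_twist)

definition twisted_sum ::
  "'g set \<Rightarrow> ('g \<Rightarrow> 'c::cstar) \<Rightarrow> ('g \<Rightarrow> 'c) \<Rightarrow> ('g \<Rightarrow> complex) \<Rightarrow> 'c" where
  "twisted_sum F N P c = (\<Sum>x\<in>F. cscale (cnj (c x)) (N x) + cscale (c x) (P x))"

lemma pres_val_twist:
  assumes \<kappa>: "\<kappa> \<in> characters" and pres: "presentation F qn qp"
  shows "pres_val \<rho> (twist \<kappa> W) F qn a0 qp
     = \<rho> a0 + twisted_sum F (\<lambda>x. qm_neg \<rho> W (qn x)) (\<lambda>x. qm_pos \<rho> W (qp x)) \<kappa>"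
proof -
  have q: "quasi_mono x (qn x)" "quasi_mono x (qp x)" if "x \<in> F" for x
    using pres that unfolding presentation_def by blast+
  have "(\<Sum>x\<in>F. qm_neg \<rho> (twist \<kappa> W) (qn x)) = (\<Sum>x\<in>F. cscale (cnj (\<kappa> x)) (qm_neg \<rho> W (qn x)))"
    using qm_neg_twist[OF \<kappa> q(1)] by (intro sum.cong) auto
  moreover have "(\<Sum>x\<in>F. qm_pos \<rho> (twist \<kappa> W) (qp x)) = (\<Sum>x\<in>F. cscale (\<kappa> x) (qm_pos \<rho> W (qp x)))"
    using qm_pos_twist[OF \<kappa> q(2)] by (intro sum.cong) auto
  ultimately show ?thesis
    unfolding pres_val_def twisted_sum_def by (simp add: sum.distrib algebra_simps)
qed

section \<open>Averaging over characters\<close>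

lemma twisted_sum_sum_coeffs:
  "(\<Sum>j\<in>J. twisted_sum F N P (c j)) = twisted_sum F N P (\<lambda>x. \<Sum>j\<in>J. c j x)"
proof -
  have "(\<Sum>j\<in>J. twisted_sum F N P (c j))
      = (\<Sum>x\<in>F. \<Sum>j\<in>J. cscale (cnj (c j x)) (N x) + cscale (c j x) (P x))"
    unfolding twisted_sum_def by (rule sum.swap)
  then show ?thesis
    by (simp add: twisted_sum_def cnj_sum cscale_sum_left sum.distrib)
qed

lemma scaleR_twisted_sum:
  "r *\<^sub>R twisted_sum F N P c = twisted_sum F N P (\<lambda>x. of_real r * c x)"
  unfolding twisted_sum_def by (simp add: scaleR_sum_right scaleR_right_distrib scaleR_cscale)

lemma twisted_sum_mult_coeffs:
  "twisted_sum F N P (\<lambda>x. \<kappa> x * A x)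
     = twisted_sum F (\<lambda>x. cscale (cnj (A x)) (N x)) (\<lambda>x. cscale (A x) (P x)) \<kappa>"
  unfolding twisted_sum_def by (simp add: cscale_mult)

lemma twisted_sum_extend:
  assumes "finite G" "F \<subseteq> G"
  shows "twisted_sum G (\<lambda>x. if x \<in> F then N x else 0) (\<lambda>x. if x \<in> F then P x else 0) c
       = twisted_sum F N P c"
proof -
  have "twisted_sum G (\<lambda>x. if x \<in> F then N x else 0) (\<lambda>x. if x \<in> F then P x else 0) c
      = (\<Sum>x\<in>G. if x \<in> F then cscale (cnj (c x)) (N x) + cscale (c x) (P x) else 0)"
    unfolding twisted_sum_def by (intro sum.cong) auto
  also have "\<dots> = twisted_sum F N P c"
    using sum.inter_restrict[OF assms(1), of "\<lambda>x. cscale (cnj (c x)) (N x) + cscale (c x) (P x)" F]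
      assms(2)
    by (simp add: twisted_sum_def Int_absorb1)
  finally show ?thesis .
qed

lemma twisted_sum_diff:
  "twisted_sum F N P c - twisted_sum F N' P' c = twisted_sum F (\<lambda>x. N x - N' x) (\<lambda>x. P x - P' x) c"
  unfolding twisted_sum_def by (simp add: sum_subtractf cscale_diff_right algebra_simps)

lemma mean_powers_tendsto_zero:
  fixes q :: complex
  assumes "cmod q = 1" "q \<noteq> 1"
  shows "(\<lambda>n. (\<Sum>j<n. q ^ j) / of_nat n) \<longlonglongrightarrow> 0"
proof (rule Lim_null_comparison)
  have "cmod ((\<Sum>j<n. q ^ j) / of_nat n) \<le> (2 / cmod (1 - q)) / real n" for n
  proof -
    have "cmod (1 - q ^ n) \<le> 2"
      using norm_triangle_ineq4[of 1 "q ^ n"] assms(1) by (simp add: norm_power)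
    moreover have "cmod ((\<Sum>j<n. q ^ j) / of_nat n) = cmod (1 - q ^ n) / (cmod (1 - q) * real n)"
      using assms(2) by (simp add: sum_gp_strict norm_divide norm_mult)
    ultimately show ?thesis by (simp add: divide_right_mono)
  qed
  then show "\<forall>\<^sub>F n in sequentially. cmod ((\<Sum>j<n. q ^ j) / of_nat n) \<le> (2 / cmod (1 - q)) / real n"
    by simp
  show "(\<lambda>n. (2 / cmod (1 - q)) / real n) \<longlonglongrightarrow> 0" by (rule lim_const_over_n)
qed

lemma twisted_sum_mean_bound:
  assumes \<kappa>: "\<kappa> \<in> characters" and \<kappa>': "\<kappa>' \<in> characters" and n: "0 < n"
    and bound: "\<forall>\<kappa>\<in>characters. norm (z + twisted_sum F N P \<kappa>) \<le> b"
  shows "norm (z + twisted_sum F N P (\<lambda>x. \<kappa> x * ((\<Sum>j<n. \<kappa>' x ^ j) / of_nat n))) \<le> b"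
proof -
  define \<psi> where "\<psi> j x = \<kappa> x * \<kappa>' x ^ j" for j x
  have "(\<lambda>x. \<kappa> x * ((\<Sum>j<n. \<kappa>' x ^ j) / of_nat n)) = (\<lambda>x. of_real (1 / real n) * (\<Sum>j<n. \<psi> j x))"
    unfolding \<psi>_def by (simp add: sum_distrib_left[symmetric] field_simps)
  then have "z + twisted_sum F N P (\<lambda>x. \<kappa> x * ((\<Sum>j<n. \<kappa>' x ^ j) / of_nat n))
      = (1 / real n) *\<^sub>R (real n *\<^sub>R z + twisted_sum F N P (\<lambda>x. \<Sum>j<n. \<psi> j x))"
    using n by (simp add: scaleR_right_distrib scaleR_twisted_sum)
  also have "\<dots> = (1 / real n) *\<^sub>R (\<Sum>j<n. z + twisted_sum F N P (\<psi> j))"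
    by (simp add: sum.distrib twisted_sum_sum_coeffs sum_constant_scaleR del: sum_constant)
  also have "norm \<dots> \<le> (1 / real n) * (\<Sum>j<n. norm (z + twisted_sum F N P (\<psi> j)))"
    by (simp add: norm_sum divide_right_mono)
  also have "\<dots> \<le> (1 / real n) * (\<Sum>j<n. b)"
    using bound characters_mult_power[OF \<kappa> \<kappa>'] unfolding \<psi>_def
    by (intro mult_left_mono sum_mono) auto
  also have "\<dots> = b" using n by simp
  finally show ?thesis .
qed

lemma twisted_sum_insert_bound:
  assumes "finite F" "x0 \<notin> F" "\<kappa> \<in> characters"
    and "norm (z + twisted_sum (insert x0 F) N P (\<lambda>x. \<kappa> x * A x)) \<le> b"
  shows "norm (z + twisted_sum F (\<lambda>x. cscale (cnj (A x)) (N x)) (\<lambda>x. cscale (A x) (P x)) \<kappa>)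
           \<le> b + cmod (A x0) * (norm (N x0) + norm (P x0))"
proof -
  define T0 where "T0 = cscale (cnj (\<kappa> x0 * A x0)) (N x0) + cscale (\<kappa> x0 * A x0) (P x0)"
  have "norm T0 \<le> norm (cscale (cnj (\<kappa> x0 * A x0)) (N x0)) + norm (cscale (\<kappa> x0 * A x0) (P x0))"
    unfolding T0_def by (rule norm_triangle_ineq)
  also have "\<dots> = cmod (A x0) * (norm (N x0) + norm (P x0))"
    by (simp add: norm_cscale norm_mult norm_character[OF assms(3)] distrib_left)
  finally have T0: "norm T0 \<le> cmod (A x0) * (norm (N x0) + norm (P x0))" .
  have eq: "z + twisted_sum F (\<lambda>x. cscale (cnj (A x)) (N x)) (\<lambda>x. cscale (A x) (P x)) \<kappa>
      = (z + twisted_sum (insert x0 F) N P (\<lambda>x. \<kappa> x * A x)) - T0"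
    unfolding T0_def twisted_sum_mult_coeffs[symmetric] using assms(1,2)
    by (simp add: twisted_sum_def)
  show ?thesis
    unfolding eq using assms(4) T0 norm_triangle_ineq4[of _ T0] by (meson add_mono order_trans)
qed

theorem norm_le_if_twisted_sums_bounded:
  fixes z :: "'c::cstar" and N P :: "'g::ab_group_add \<Rightarrow> 'c"
  assumes "finite F" and "\<forall>x\<in>F. \<exists>\<kappa>\<in>characters. \<kappa> x \<noteq> 1"
    and "\<forall>\<kappa>\<in>characters. norm (z + twisted_sum F N P \<kappa>) \<le> b"
  shows "norm z \<le> b"
  using assms
proof (induction F arbitrary: N P b rule: finite_induct)
  case empty
  have "(\<lambda>_. 1) \<in> characters" by (simp add: characters_def)
  then show ?case using empty.prems(2) by (auto simp: twisted_sum_def)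
next
  case (insert x0 F)
  obtain \<kappa>' where \<kappa>': "\<kappa>' \<in> characters" "\<kappa>' x0 \<noteq> 1" using insert.prems(1) by blast
  define A where "A n x = (\<Sum>j<n. \<kappa>' x ^ j) / of_nat n" for n x
  define K where "K = norm (N x0) + norm (P x0)"
  have "norm z \<le> b + cmod (A n x0) * K" if "0 < n" for n
  proof (rule insert.IH)
    show "\<forall>x\<in>F. \<exists>\<kappa>\<in>characters. \<kappa> x \<noteq> 1" using insert.prems(1) by blast
    show "\<forall>\<kappa>\<in>characters. norm (z + twisted_sum F (\<lambda>x. cscale (cnj (A n x)) (N x))
        (\<lambda>x. cscale (A n x) (P x)) \<kappa>) \<le> b + cmod (A n x0) * K"
    proof
      fix \<kappa> :: "'g \<Rightarrow> complex" assume \<kappa>: "\<kappa> \<in> characters"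
      have "norm (z + twisted_sum (insert x0 F) N P (\<lambda>x. \<kappa> x * A n x)) \<le> b"
        unfolding A_def by (rule twisted_sum_mean_bound[OF \<kappa> \<kappa>'(1) that insert.prems(2)])
      then show "norm (z + twisted_sum F (\<lambda>x. cscale (cnj (A n x)) (N x))
          (\<lambda>x. cscale (A n x) (P x)) \<kappa>) \<le> b + cmod (A n x0) * K"
        unfolding K_def by (rule twisted_sum_insert_bound[OF insert.hyps \<kappa>])
    qed
  qed
  moreover have "(\<lambda>n. A n x0) \<longlonglongrightarrow> 0"
    unfolding A_def by (rule mean_powers_tendsto_zero[OF norm_character[OF \<kappa>'(1)] \<kappa>'(2)])
  then have "(\<lambda>n. b + cmod (A n x0) * K) \<longlonglongrightarrow> b"
    using tendsto_add[OF tendsto_const tendsto_mult[OF tendsto_norm_zero tendsto_const]] by fastforce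
  ultimately show ?case
    by (intro LIMSEQ_le_const[where a = "norm z"]) (auto intro!: exI[of _ 1])
qed

theorem eq_if_twisted_sums_eq:
  fixes z z' :: "'c::cstar" and N P N' P' :: "'g::ab_group_add \<Rightarrow> 'c"
  assumes "finite F" "finite F'" and "\<forall>x\<in>F \<union> F'. \<exists>\<kappa>\<in>characters. \<kappa> x \<noteq> 1"
    and "\<forall>\<kappa>\<in>characters. z + twisted_sum F N P \<kappa> = z' + twisted_sum F' N' P' \<kappa>"
  shows "z = z'"
proof -
  define M where "M N F x = (if x \<in> F then N x else 0)" for N :: "'g \<Rightarrow> 'c" and F x
  have "norm (z - z') \<le> 0"
  proof (rule norm_le_if_twisted_sums_bounded)
    show "finite (F \<union> F')" using assms(1,2) by simp
    show "\<forall>\<kappa>\<in>characters. norm (z - z' + twisted_sum (F \<union> F')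
        (\<lambda>x. M N F x - M N' F' x) (\<lambda>x. M P F x - M P' F' x) \<kappa>) \<le> 0"
    proof
      fix \<kappa> :: "'g \<Rightarrow> complex" assume "\<kappa> \<in> characters"
      have "twisted_sum (F \<union> F') (\<lambda>x. M N F x - M N' F' x) (\<lambda>x. M P F x - M P' F' x) \<kappa>
          = twisted_sum F N P \<kappa> - twisted_sum F' N' P' \<kappa>"
        unfolding twisted_sum_diff[symmetric] M_def using assms(1,2)
        by (simp add: twisted_sum_extend)
      moreover have "z - z' + (twisted_sum F N P \<kappa> - twisted_sum F' N' P' \<kappa>)
          = (z + twisted_sum F N P \<kappa>) - (z' + twisted_sum F' N' P' \<kappa>)"
        by (simp add: algebra_simps)
      ultimately show "norm (z - z' + twisted_sum (F \<union> F')
          (\<lambda>x. M N F x - M N' F' x) (\<lambda>x. M P F x - M P' F' x) \<kappa>) \<le> 0"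
        using assms(4) \<open>\<kappa> \<in> characters\<close> by simp
    qed
  qed (use assms(3) in blast)
  then show ?thesis by simp
qed

lemma norm_le_presentation_bound:
  fixes \<sigma> :: "'a::cstar \<Rightarrow> 'c::cstar" and V H :: "'g::linordered_ab_group_add \<Rightarrow> 'a \<Rightarrow> 'a"
  assumes cp: "cp_rep V H \<sigma> U" and pres: "presentation F qn qp"
    and bound: "\<forall>(\<rho>::'a \<Rightarrow> 'c) W. cp_rep V H \<rho> W \<longrightarrow> norm (pres_val \<rho> W F qn a0 qp) \<le> b"
  shows "norm (\<sigma> a0) \<le> b"
proof (rule norm_le_if_twisted_sums_bounded)
  show "finite F" "\<forall>x\<in>F. \<exists>\<kappa>\<in>characters. \<kappa> x \<noteq> 1"
    using pres exists_character_ne_one unfolding presentation_def by auto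
  show "\<forall>\<kappa>\<in>characters. norm (\<sigma> a0
      + twisted_sum F (\<lambda>x. qm_neg \<sigma> U (qn x)) (\<lambda>x. qm_pos \<sigma> U (qp x)) \<kappa>) \<le> b"
    using bound cp_rep_twist[OF cp] pres_val_twist[OF _ pres] by metis
qed

lemma eq_if_presentations_eq:
  fixes \<sigma> :: "'a::cstar \<Rightarrow> 'c::cstar" and V H :: "'g::linordered_ab_group_add \<Rightarrow> 'a \<Rightarrow> 'a"
  assumes cp: "cp_rep V H \<sigma> U" and pres: "presentation F qn qp" and pres': "presentation F' qn' qp'"
    and eq: "\<forall>(\<rho>::'a \<Rightarrow> 'c) W. cp_rep V H \<rho> W \<longrightarrow>
               pres_val \<rho> W F qn a0 qp = pres_val \<rho> W F' qn' a0' qp'"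
  shows "\<sigma> a0 = \<sigma> a0'"
proof (rule eq_if_twisted_sums_eq)
  show "finite F" "finite F'" "\<forall>x\<in>F \<union> F'. \<exists>\<kappa>\<in>characters. \<kappa> x \<noteq> 1"
    using pres pres' exists_character_ne_one unfolding presentation_def by auto
  show "\<forall>\<kappa>\<in>characters.
      \<sigma> a0 + twisted_sum F (\<lambda>x. qm_neg \<sigma> U (qn x)) (\<lambda>x. qm_pos \<sigma> U (qp x)) \<kappa>
      = \<sigma> a0' + twisted_sum F' (\<lambda>x. qm_neg \<sigma> U (qn' x)) (\<lambda>x. qm_pos \<sigma> U (qp' x)) \<kappa>"
    using eq cp_rep_twist[OF cp] pres_val_twist[OF _ pres] pres_val_twist[OF _ pres'] by metis
qed

theorem proposition4p6:
  fixes V H :: "'g::linordered_ab_group_add \<Rightarrow> 'a::cstar \<Rightarrow> 'a"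
    and F F' :: "'g set"
    and qn qp qn' qp' :: "'g \<Rightarrow> ('a \<times> 'g) list list"
    and a0 a0' :: 'a
  assumes act: "is_action V"
    and fine: "\<exists>(\<sigma>::'a \<Rightarrow> 'c::cstar) U. covariant_rep V \<sigma> U"
    and H_def: "\<And>(\<sigma>::'a \<Rightarrow> 'c) U x a. covariant_rep V \<sigma> U \<Longrightarrow> 0 \<le> x \<Longrightarrow>
                  \<sigma> (H x a) = invol (U x) * \<sigma> a * U x"
    and pres: "presentation F qn qp"
    and pres': "presentation F' qn' qp'"
  shows "(\<forall>b. (\<forall>(\<rho>::'a \<Rightarrow> 'c) W. cp_rep V H \<rho> W \<longrightarrow> norm (pres_val \<rho> W F qn a0 qp) \<le> b)
              \<longrightarrow> norm a0 \<le> b)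
       \<and> ((\<forall>(\<rho>::'a \<Rightarrow> 'c) W. cp_rep V H \<rho> W \<longrightarrow>
              pres_val \<rho> W F qn a0 qp = pres_val \<rho> W F' qn' a0' qp') \<longrightarrow> a0 = a0')"
proof -
  obtain \<sigma> :: "'a \<Rightarrow> 'c" and U where cr: "covariant_rep V \<sigma> U" using fine by blast
  then have \<sigma>: "unital_star_hom \<sigma>" "inj \<sigma>" and cp: "cp_rep V H \<sigma> U"
    using H_def[OF cr] unfolding covariant_rep_def cp_rep_def by auto
  show ?thesis
  proof (intro conjI allI impI)
    fix b
    assume "\<forall>(\<rho>::'a \<Rightarrow> 'c) W. cp_rep V H \<rho> W \<longrightarrow> norm (pres_val \<rho> W F qn a0 qp) \<le> b"
    then have "norm (\<sigma> a0) \<le> b" by (rule norm_le_presentation_bound[OF cp pres])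
    then show "norm a0 \<le> b" using norm_le_norm_injective_star_hom[OF \<sigma>] by (rule order_trans[rotated])
  next
    assume "\<forall>(\<rho>::'a \<Rightarrow> 'c) W. cp_rep V H \<rho> W \<longrightarrow>
              pres_val \<rho> W F qn a0 qp = pres_val \<rho> W F' qn' a0' qp'"
    then have "\<sigma> a0 = \<sigma> a0'" by (rule eq_if_presentations_eq[OF cp pres pres'])
    then show "a0 = a0'" by (rule injD[OF \<sigma>(2)])
  qed
qed

end
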